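(* Let $r\ge 2$, $d\ge 1$. Let $\Delta\subset\mathbb{R}^d$ be a regular simplex with vertices $v_1,\ldots,v_{d+1}$ and centre $c$, and let $B$ be the closed Euclidean unit ball centred at the origin. Then for all sufficiently small $\varepsilon>0$ the following holds. For each $h\in[d+1]$ let $U_h\subset v_h+\varepsilon B$ be a set of $r-1$ points, and let $A=\{c\}\cup\bigcup_{h=1}^{d+1}U_h$ (so $|A|=(r-1)(d+1)+1$), where the points are chosen so that the coordinates of the points of $A$ are algebraically independent. Then there is no proper partition $\{A_1,\ldots,A_r\}$ of $A$ for which the solution $(z,\alpha)$ of \[ z=\sum_{x\in A_j}\alpha(x)\,x \quad\text{and}\quad 1=\sum_{x\in A_j}\alpha(x)\qquad\text{for all } j\in[r] \] satisfies $\alpha(c)<0$ and $\alpha(x)>0$ for all $x\in A\setminus\{c\}$.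
   Context: A partition $\{A_1,\ldots,A_r\}$ of $A$ into $r$ parts is called proper if $1\le |A_j|\le d+1$ for every $j$. Note that here $M=\{c\}$ does not satisfy $\operatorname{conv}M\cap\operatorname{conv}(A\setminus M)=\emptyset$. *)

theory Defs
  imports "HOL-Analysis.Analysis"
begin

text \<open>A polynomial is
  given by a finite set S of exponent vectors (supported on I) and rational coefficients q.\<close>
definition alg_indep_rat :: "'i set \<Rightarrow> ('i \<Rightarrow> real) \<Rightarrow> bool" where
  "alg_indep_rat I x \<longleftrightarrow>
     (\<forall>S q. finite S \<longrightarrow> (\<forall>m\<in>S. \<forall>i. i \<notin> I \<longrightarrow> m i = 0) \<longrightarrow>
        (\<Sum>m\<in>S. of_rat (q m) * (\<Prod>i\<in>I. x i ^ m i)) = 0 \<longrightarrow> (\<forall>m\<in>S. q m = 0))"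

definition regular_simplex :: "(nat \<Rightarrow> real^'n) \<Rightarrow> bool" where
  "regular_simplex v \<longleftrightarrow>
     (\<exists>s>0. \<forall>i\<in>{1..CARD('n)+1}. \<forall>j\<in>{1..CARD('n)+1}. i \<noteq> j \<longrightarrow> dist (v i) (v j) = s)"

definition simplex_centre :: "(nat \<Rightarrow> real^'n) \<Rightarrow> real^'n" where
  "simplex_centre v = (1 / real (CARD('n) + 1)) *\<^sub>R (\<Sum>h\<in>{1..CARD('n)+1}. v h)"

definition proper_partition :: "nat \<Rightarrow> (real^'n) set \<Rightarrow> (nat \<Rightarrow> (real^'n) set) \<Rightarrow> bool" where
  "proper_partition r A P \<longleftrightarrow>
     (\<Union>j\<in>{1..r}. P j) = A \<and>
     (\<forall>j\<in>{1..r}. \<forall>k\<in>{1..r}. j \<noteq> k \<longrightarrow> P j \<inter> P k = {}) \<and>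
     (\<forall>j\<in>{1..r}. finite (P j) \<and> 1 \<le> card (P j) \<and> card (P j) \<le> CARD('n) + 1)"

end

theory Submission
  imports Defs
begin

text \<open>Write \<open>a h = v h - c\<close>. These vectors sum to zero, so for the common point \<open>z\<close> of the
  affine hulls some \<open>a k\<close> satisfies \<open>a k \<bullet> (z - c) \<ge> 0\<close>. Points of \<open>A\<close> near another vertex
  \<open>v h\<close> have \<open>a k \<bullet> (x - c) < 0\<close>, because distinct centred vertices of a regular simplex have
  negative inner product. So a part avoiding the \<open>r - 1\<close> points near \<open>v k\<close> would be an affine
  combination with \<open>a k \<bullet> (z - c) < 0\<close>, the centre entering with a negative weight; hence each
  of the \<open>r\<close> disjoint parts meets that cluster, which is impossible.\<close>

lemma sum_vertices_minus_centre:
  fixes v :: "nat \<Rightarrow> real^'n"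
  shows "(\<Sum>h\<in>{1..CARD('n)+1}. v h - simplex_centre v) = 0"
proof -
  have "(\<Sum>h\<in>{1..CARD('n)+1}. v h - simplex_centre v)
      = (\<Sum>h\<in>{1..CARD('n)+1}. v h) - real (CARD('n)+1) *\<^sub>R simplex_centre v"
    by (simp only: sum_subtractf sum_constant_scaleR card_atLeastAtMost) simp
  also have "real (CARD('n)+1) *\<^sub>R simplex_centre v = (\<Sum>h\<in>{1..CARD('n)+1}. v h)"
    unfolding simplex_centre_def by (simp del: of_nat_Suc)
  finally show ?thesis by simp
qed

lemma sum_zero_ex_inner_nonneg:
  fixes a :: "'i \<Rightarrow> 'a::real_inner"
  assumes "finite I" "I \<noteq> {}" "sum a I = 0"
  shows "\<exists>k\<in>I. 0 \<le> a k \<bullet> w"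
proof (rule ccontr)
  assume "\<not> ?thesis"
  then have "(\<Sum>k\<in>I. a k \<bullet> w) < (\<Sum>k\<in>I. 0)"
    using assms(1,2) by (intro sum_strict_mono) auto
  moreover have "(\<Sum>k\<in>I. a k \<bullet> w) = 0"
    using assms(3) by (simp add: inner_sum_left[symmetric])
  ultimately show False by simp
qed

lemma centred_equilateral_norm:
  fixes a :: "'i \<Rightarrow> 'a::real_inner"
  assumes fin: "finite I" and sum0: "sum a I = 0"
    and equi: "\<And>i k. i \<in> I \<Longrightarrow> k \<in> I \<Longrightarrow> i \<noteq> k \<Longrightarrow> dist (a i) (a k) = s"
    and k: "k \<in> I"
  shows "2 * real (card I) * (a k \<bullet> a k) = (real (card I) - 1) * s\<^sup>2"
proof -
  define m where "m = real (card I)"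
  have card_minus_1: "real (card I - 1) = m - 1"
  proof -
    have "card I \<ge> 1" using fin k by (metis Suc_leI One_nat_def card_gt_0_iff empty_iff)
    then show ?thesis by (simp add: m_def of_nat_diff)
  qed
  define S where "S = (\<Sum>i\<in>I. a i \<bullet> a i)"
  have dist_sq: "a i \<bullet> a i + a k \<bullet> a k - 2 * (a i \<bullet> a k) = s\<^sup>2"
    if "i \<in> I" "k \<in> I" "i \<noteq> k" for i k
  proof -
    have "(a i - a k) \<bullet> (a i - a k) = s\<^sup>2"
      using equi[OF that] by (metis dist_norm power2_norm_eq_inner)
    then show ?thesis by (simp add: inner_diff_left inner_diff_right inner_commute)
  qed
  have row: "S + m * (a k \<bullet> a k) = (m - 1) * s\<^sup>2" if k: "k \<in> I" for k
  proof -
    have "(\<Sum>i\<in>I. a i \<bullet> a k) = 0"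
      using sum0 by (simp add: inner_sum_left[symmetric])
    then have cross: "(\<Sum>i\<in>I-{k}. a i \<bullet> a k) = - (a k \<bullet> a k)"
      using sum.remove[OF fin k, of "\<lambda>i. a i \<bullet> a k"] by simp
    have "(m - 1) * s\<^sup>2 = (\<Sum>i\<in>I-{k}. a i \<bullet> a i + a k \<bullet> a k - 2 * (a i \<bullet> a k))"
      using dist_sq k fin card_minus_1 by simp
    also have "\<dots> = (\<Sum>i\<in>I-{k}. a i \<bullet> a i) + (m - 1) * (a k \<bullet> a k) - 2 * (\<Sum>i\<in>I-{k}. a i \<bullet> a k)"
      using k fin card_minus_1 by (simp add: sum.distrib sum_subtractf sum_distrib_left)
    also have "(\<Sum>i\<in>I-{k}. a i \<bullet> a i) = S - a k \<bullet> a k"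
      unfolding S_def using sum.remove[OF fin k, of "\<lambda>i. a i \<bullet> a i"] by simp
    finally show ?thesis using cross by (simp add: algebra_simps)
  qed
  have "m * S + m * S = (\<Sum>i\<in>I. S + m * (a i \<bullet> a i))"
    by (simp add: sum.distrib sum_distrib_left[symmetric] S_def m_def)
  also have "\<dots> = m * ((m - 1) * s\<^sup>2)"
    using row by (simp add: m_def)
  finally have "2 * S = (m - 1) * s\<^sup>2"
    using k fin by (auto simp: m_def card_gt_0_iff)
  then have "2 * (m * (a k \<bullet> a k)) = (m - 1) * s\<^sup>2"
    using row[OF k] by linarith
  then show ?thesis
    unfolding m_def by (simp only: mult.assoc)
qed

lemma centred_equilateral_inner:
  fixes a :: "'i \<Rightarrow> 'a::real_inner"
  assumes fin: "finite I" and sum0: "sum a I = 0"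
    and equi: "\<And>i k. i \<in> I \<Longrightarrow> k \<in> I \<Longrightarrow> i \<noteq> k \<Longrightarrow> dist (a i) (a k) = s"
    and ik: "i \<in> I" "k \<in> I" "i \<noteq> k"
  shows "a i \<bullet> a k = - s\<^sup>2 / (2 * real (card I))"
proof -
  define m where "m = real (card I)"
  have m: "m > 0" using ik fin by (auto simp: m_def card_gt_0_iff)
  have norms: "2 * m * (a i \<bullet> a i) = (m - 1) * s\<^sup>2" "2 * m * (a k \<bullet> a k) = (m - 1) * s\<^sup>2"
    using centred_equilateral_norm[OF fin sum0 equi] ik unfolding m_def by blast+
  have "(a i - a k) \<bullet> (a i - a k) = s\<^sup>2"
    using equi[OF ik] by (metis dist_norm power2_norm_eq_inner)
  then have "2 * (a i \<bullet> a k) = a i \<bullet> a i + a k \<bullet> a k - s\<^sup>2"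
    by (simp add: inner_diff_left inner_diff_right inner_commute)
  then have "2 * m * (2 * (a i \<bullet> a k)) = 2 * m * (a i \<bullet> a i) + 2 * m * (a k \<bullet> a k) - 2 * m * s\<^sup>2"
    by (simp add: right_diff_distrib distrib_left)
  also have "\<dots> = - 2 * s\<^sup>2"
    unfolding norms by (simp add: algebra_simps)
  finally have four_m: "2 * m * (2 * (a i \<bullet> a k)) = - 2 * s\<^sup>2" .
  have "a i \<bullet> a k = 2 * m * (2 * (a i \<bullet> a k)) / (4 * m)"
    using m by simp
  also have "\<dots> = - s\<^sup>2 / (2 * m)"
    unfolding four_m using m by simp
  finally show ?thesis
    unfolding m_def .
qed

lemma regular_simplex_near_vertex_inner_neg:
  fixes v :: "nat \<Rightarrow> real^'n"
  assumes "regular_simplex v"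
  obtains \<epsilon>0 where "\<epsilon>0 > 0"
    and "\<And>k h x \<epsilon>. k \<in> {1..CARD('n)+1} \<Longrightarrow> h \<in> {1..CARD('n)+1} \<Longrightarrow> h \<noteq> k \<Longrightarrow>
           \<epsilon> < \<epsilon>0 \<Longrightarrow> dist x (v h) \<le> \<epsilon> \<Longrightarrow>
           (v k - simplex_centre v) \<bullet> (x - simplex_centre v) < 0"
proof -
  define I where "I = {1..CARD('n)+1}"
  define a where "a h = v h - simplex_centre v" for h
  obtain s where s: "s > 0" "\<And>i k. i \<in> I \<Longrightarrow> k \<in> I \<Longrightarrow> i \<noteq> k \<Longrightarrow> dist (v i) (v k) = s"
    using assms unfolding regular_simplex_def I_def by blast
  define \<mu> where "\<mu> = s\<^sup>2 / (2 * real (card I))"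
  have \<mu>: "\<mu> > 0" using s(1) by (simp add: \<mu>_def I_def)
  have sum_a: "sum a I = 0"
    using sum_vertices_minus_centre[of v] by (simp add: a_def I_def)
  have dist_a: "dist (a i) (a k) = s" if "i \<in> I" "k \<in> I" "i \<noteq> k" for i k
    using s(2)[OF that] by (simp add: a_def dist_norm)
  have inner_a: "a k \<bullet> a h = - \<mu>" if "k \<in> I" "h \<in> I" "h \<noteq> k" for k h
    using centred_equilateral_inner[OF _ sum_a dist_a, of k h] that by (simp add: \<mu>_def I_def)
  define N where "N = (\<Sum>k\<in>I. norm (a k))"
  have N: "N \<ge> 0" "\<And>k. k \<in> I \<Longrightarrow> norm (a k) \<le> N"
    unfolding N_def by (simp add: sum_nonneg) (rule member_le_sum, auto simp: I_def)
  show thesis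
  proof (rule that)
    show "\<mu> / (N + 1) > 0" using \<mu> N(1) by simp
    fix k h x \<epsilon>
    assume kh: "k \<in> {1..CARD('n)+1}" "h \<in> {1..CARD('n)+1}" "h \<noteq> k"
      and \<epsilon>: "\<epsilon> < \<mu> / (N + 1)" and x: "dist x (v h) \<le> \<epsilon>"
    have "0 \<le> \<epsilon>" using x zero_le_dist order_trans by blast
    then have "N * \<epsilon> \<le> (N + 1) * \<epsilon>" by (simp add: distrib_right)
    also have "\<dots> < \<mu>" using \<epsilon> N(1) by (simp add: pos_less_divide_eq mult.commute)
    finally have "N * \<epsilon> < \<mu>" .
    have k: "k \<in> I" and h: "h \<in> I" using kh by (simp_all add: I_def)
    have "norm (x - v h) \<le> \<epsilon>" using x by (simp add: dist_norm)
    then have "norm (a k) * norm (x - v h) \<le> N * \<epsilon>"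
      using N(1) N(2)[OF k] by (intro mult_mono) simp_all
    moreover have "a k \<bullet> (x - v h) \<le> norm (a k) * norm (x - v h)"
      by (rule norm_cauchy_schwarz)
    moreover have "a k \<bullet> (x - simplex_centre v) = - \<mu> + a k \<bullet> (x - v h)"
      using inner_a[OF k h kh(3)] by (simp add: a_def inner_diff_right)
    ultimately have "a k \<bullet> (x - simplex_centre v) < 0"
      using \<open>N * \<epsilon> < \<mu>\<close> by linarith
    then show "(v k - simplex_centre v) \<bullet> (x - simplex_centre v) < 0"
      by (simp add: a_def)
  qed
qed

lemma inner_affine_combination_neg:
  fixes u c :: "'a::real_inner"
  assumes fin: "finite S" and sum1: "sum \<alpha> S = 1" and "\<alpha> c \<le> 0"
    and pts: "\<And>x. x \<in> S \<Longrightarrow> x \<noteq> c \<Longrightarrow> 0 < \<alpha> x \<and> u \<bullet> (x - c) < 0"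
  shows "u \<bullet> ((\<Sum>x\<in>S. \<alpha> x *\<^sub>R x) - c) < 0"
proof -
  have "S - {c} \<noteq> {}"
  proof
    assume "S - {c} = {}"
    then have "S = {} \<or> S = {c}" by blast
    then have "sum \<alpha> S \<le> 0" using \<open>\<alpha> c \<le> 0\<close> by auto
    with sum1 show False by simp
  qed
  have "(\<Sum>x\<in>S. \<alpha> x *\<^sub>R (x - c)) = (\<Sum>x\<in>S. \<alpha> x *\<^sub>R x) - sum \<alpha> S *\<^sub>R c"
    by (simp add: scaleR_diff_right sum_subtractf scaleR_sum_left)
  then have "(\<Sum>x\<in>S. \<alpha> x *\<^sub>R x) - c = (\<Sum>x\<in>S. \<alpha> x *\<^sub>R (x - c))"
    unfolding sum1 by simp
  then have "u \<bullet> ((\<Sum>x\<in>S. \<alpha> x *\<^sub>R x) - c) = (\<Sum>x\<in>S. \<alpha> x * (u \<bullet> (x - c)))"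
    by (simp only: inner_sum_right inner_scaleR_right)
  also have "\<dots> = (\<Sum>x\<in>S - {c}. \<alpha> x * (u \<bullet> (x - c)))"
    using fin by (intro sum.mono_neutral_right) auto
  also have "\<dots> < (\<Sum>x\<in>S - {c}. 0)"
  proof (rule sum_strict_mono)
    fix x assume "x \<in> S - {c}"
    then show "\<alpha> x * (u \<bullet> (x - c)) < 0" using pts by (simp add: mult_pos_neg)
  qed (use fin \<open>S - {c} \<noteq> {}\<close> in auto)
  finally show ?thesis by simp
qed

lemma card_le_if_disjoint_family_meets:
  assumes "finite U"
    and disj: "\<And>i j. i \<in> J \<Longrightarrow> j \<in> J \<Longrightarrow> i \<noteq> j \<Longrightarrow> P i \<inter> P j = {}"
    and meets: "\<And>j. j \<in> J \<Longrightarrow> P j \<inter> U \<noteq> {}"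
  shows "card J \<le> card U"
proof -
  have "\<forall>j\<in>J. \<exists>x. x \<in> P j \<inter> U" using meets by blast
  then obtain f where f: "\<forall>j\<in>J. f j \<in> P j \<inter> U" by (metis bchoice)
  have "inj_on f J"
  proof (rule inj_onI, rule ccontr)
    fix i j assume "i \<in> J" "j \<in> J" "f i = f j" "i \<noteq> j"
    then have "f i \<in> P i \<inter> P j" using f by auto
    with disj[OF \<open>i \<in> J\<close> \<open>j \<in> J\<close> \<open>i \<noteq> j\<close>] show False by simp
  qed
  moreover have "f ` J \<subseteq> U" using f by blast
  ultimately show ?thesis using \<open>finite U\<close> by (rule card_inj_on_le)
qed

lemma no_common_point_of_parts_avoiding_clusters:
  fixes c :: "'a::real_inner" and a :: "'i \<Rightarrow> 'a"
  assumes I: "finite I" "I \<noteq> {}" "sum a I = 0"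
    and sep: "\<And>h k x. h \<in> I \<Longrightarrow> k \<in> I \<Longrightarrow> h \<noteq> k \<Longrightarrow> x \<in> U h \<Longrightarrow> a k \<bullet> (x - c) < 0"
    and small: "\<And>h. h \<in> I \<Longrightarrow> finite (U h) \<and> card (U h) < card J"
    and cover: "(\<Union>j\<in>J. P j) \<subseteq> insert c (\<Union>h\<in>I. U h)"
    and disj: "\<And>i j. i \<in> J \<Longrightarrow> j \<in> J \<Longrightarrow> i \<noteq> j \<Longrightarrow> P i \<inter> P j = {}"
    and fin: "\<And>j. j \<in> J \<Longrightarrow> finite (P j)"
    and comb: "\<And>j. j \<in> J \<Longrightarrow> z = (\<Sum>x\<in>P j. \<alpha> x *\<^sub>R x) \<and> sum \<alpha> (P j) = 1"
    and \<alpha>: "\<alpha> c \<le> 0" "\<And>x. x \<in> (\<Union>h\<in>I. U h) - {c} \<Longrightarrow> 0 < \<alpha> x"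
  shows False
proof -
  obtain k where k: "k \<in> I" "0 \<le> a k \<bullet> (z - c)"
    using sum_zero_ex_inner_nonneg[OF I] by blast
  have "P j \<inter> U k \<noteq> {}" if j: "j \<in> J" for j
  proof
    assume avoid: "P j \<inter> U k = {}"
    have pts: "0 < \<alpha> x \<and> a k \<bullet> (x - c) < 0" if x: "x \<in> P j" "x \<noteq> c" for x
    proof -
      obtain h where h: "h \<in> I" "x \<in> U h" using cover j x by blast
      have "h \<noteq> k" using avoid h(2) x(1) by blast
      then show ?thesis using sep[OF h(1) k(1) _ h(2)] \<alpha>(2) h x(2) by blast
    qed
    have "a k \<bullet> ((\<Sum>x\<in>P j. \<alpha> x *\<^sub>R x) - c) < 0"
      using fin[OF j] conjunct2[OF comb[OF j]] \<alpha>(1) pts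
      by (rule inner_affine_combination_neg)
    with comb[OF j] k(2) show False by simp
  qed
  with conjunct1[OF small[OF k(1)]] disj have "card J \<le> card (U k)"
    by (rule card_le_if_disjoint_family_meets)
  with small[OF k(1)] show False by simp
qed

theorem mainTheorem7:
  fixes r :: nat and v :: "nat \<Rightarrow> real^'n"
  assumes "r \<ge> 2" and "regular_simplex v"
  shows "\<exists>\<epsilon>0>0. \<forall>\<epsilon>. 0 < \<epsilon> \<and> \<epsilon> < \<epsilon>0 \<longrightarrow>
    (\<forall>U :: nat \<Rightarrow> (real^'n) set. \<forall>A.
       (\<forall>h\<in>{1..CARD('n)+1}. finite (U h) \<and> card (U h) = r - 1 \<and> U h \<subseteq> cball (v h) \<epsilon>) \<longrightarrow>
       A = insert (simplex_centre v) (\<Union>h\<in>{1..CARD('n)+1}. U h) \<longrightarrow>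
       alg_indep_rat (A \<times> UNIV) (\<lambda>(x, i). x $ i) \<longrightarrow>
       \<not> (\<exists>P z \<alpha>. proper_partition r A P \<and>
             (\<forall>j\<in>{1..r}. z = (\<Sum>x\<in>P j. \<alpha> x *\<^sub>R x) \<and> (\<Sum>x\<in>P j. \<alpha> x) = 1) \<and>
             \<alpha> (simplex_centre v) < 0 \<and>
             (\<forall>x\<in>A - {simplex_centre v}. \<alpha> x > 0)))"
proof -
  define c where "c = simplex_centre v"
  define I where "I = {1..CARD('n)+1}"
  obtain \<epsilon>0 where \<epsilon>0: "\<epsilon>0 > 0" and near: "\<And>k h x \<epsilon>. k \<in> I \<Longrightarrow> h \<in> I \<Longrightarrow> h \<noteq> k \<Longrightarrow>
      \<epsilon> < \<epsilon>0 \<Longrightarrow> dist x (v h) \<le> \<epsilon> \<Longrightarrow> (v k - c) \<bullet> (x - c) < 0"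
    using regular_simplex_near_vertex_inner_neg[OF assms(2), folded c_def I_def] by blast
  have sum_I: "sum (\<lambda>h. v h - c) I = 0"
    using sum_vertices_minus_centre[of v] by (simp add: c_def I_def)
  show ?thesis
  proof (intro exI[of _ \<epsilon>0] conjI allI impI notI \<epsilon>0, elim exE conjE)
    fix \<epsilon> :: real and U :: "nat \<Rightarrow> (real^'n) set" and A P z \<alpha>
    assume \<epsilon>: "\<epsilon> < \<epsilon>0"
      and U: "\<forall>h\<in>{1..CARD('n)+1}. finite (U h) \<and> card (U h) = r - 1 \<and> U h \<subseteq> cball (v h) \<epsilon>"
      and A: "A = insert (simplex_centre v) (\<Union>h\<in>{1..CARD('n)+1}. U h)"
      and P: "proper_partition r A P"
      and comb: "\<forall>j\<in>{1..r}. z = (\<Sum>x\<in>P j. \<alpha> x *\<^sub>R x) \<and> (\<Sum>x\<in>P j. \<alpha> x) = 1"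
      and \<alpha>: "\<alpha> (simplex_centre v) < 0" "\<forall>x\<in>A - {simplex_centre v}. \<alpha> x > 0"
    have sep: "(v k - c) \<bullet> (x - c) < 0" if "h \<in> I" "k \<in> I" "h \<noteq> k" "x \<in> U h" for h k x
    proof -
      have "x \<in> cball (v h) \<epsilon>" using U that(1,4) unfolding I_def by blast
      then have "dist x (v h) \<le> \<epsilon>" by (simp add: dist_commute)
      then show ?thesis by (rule near[OF that(2,1,3) \<epsilon>])
    qed
    have small: "finite (U h) \<and> card (U h) < card {1..r}" if "h \<in> I" for h
      using U that assms(1) by (auto simp: I_def)
    have cover: "(\<Union>j\<in>{1..r}. P j) \<subseteq> insert c (\<Union>h\<in>I. U h)"
      and disj: "\<And>i j. i \<in> {1..r} \<Longrightarrow> j \<in> {1..r} \<Longrightarrow> i \<noteq> j \<Longrightarrow> P i \<inter> P j = {}"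
      and fin: "\<And>j. j \<in> {1..r} \<Longrightarrow> finite (P j)"
      using P unfolding proper_partition_def A c_def I_def by blast+
    have comb': "\<And>j. j \<in> {1..r} \<Longrightarrow> z = (\<Sum>x\<in>P j. \<alpha> x *\<^sub>R x) \<and> sum \<alpha> (P j) = 1"
      using comb by blast
    have \<alpha>': "\<alpha> c \<le> 0" "\<And>x. x \<in> (\<Union>h\<in>I. U h) - {c} \<Longrightarrow> 0 < \<alpha> x"
      using \<alpha> unfolding A c_def I_def by auto
    have "finite I" "I \<noteq> {}" by (auto simp: I_def)
    from no_common_point_of_parts_avoiding_clusters[OF this sum_I sep small cover disj fin comb' \<alpha>']
    show False .
  qed
qed

end
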